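(* Let $b\ge2$ and $e\ge2$ be integers. For every integer $h\ge1$ there are infinitely many $e$-power $b$-happy numbers of height exactly $h$.
   Context: For integers $b>1$, $e>1$ and a positive integer $n=\sum_{i=0}^{r} d_i b^i$ written in base $b$ (digits $0\le d_i\le b-1$), the $e$-power base-$b$ happy function is $S_{e,b}(n)=\sum_{i=0}^{r} d_i^e$. A positive integer $n$ is $e$-power $b$-happy if $S_{e,b}^{\ell}(n)=1$ for some $\ell\ge 1$ ($S^\ell$ the $\ell$-fold iterate). The height of $1$ is $0$, and the height of a happy number $n>1$ is the least $\ell\ge1$ with $S_{e,b}^{\ell}(n)=1$. *)

theory Defs
  imports Main
begin

fun digits :: "nat \<Rightarrow> nat \<Rightarrow> nat list" where
  "digits b n = (if b \<le> 1 \<or> n = 0 then [] else n mod b # digits b (n div b))"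

declare digits.simps [simp del]

definition happy_fun :: "nat \<Rightarrow> nat \<Rightarrow> nat \<Rightarrow> nat" where
  "happy_fun e b n = (\<Sum>d\<leftarrow>digits b n. d ^ e)"

definition is_happy :: "nat \<Rightarrow> nat \<Rightarrow> nat \<Rightarrow> bool" where
  "is_happy e b n \<longleftrightarrow> n > 0 \<and> (\<exists>l\<ge>1. (happy_fun e b ^^ l) n = 1)"

definition happy_height :: "nat \<Rightarrow> nat \<Rightarrow> nat \<Rightarrow> nat" where
  "happy_height e b n = (if n = 1 then 0 else (LEAST l. l \<ge> 1 \<and> (happy_fun e b ^^ l) n = 1))"

end

theory Submission
  imports Defs
begin

text \<open>Every positive x has infinitely many preimages under S = happy_fun e b: the repunit
  consisting of x ones maps to x, and appending zeros does not change the value of S.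
  Starting from 1 and repeatedly choosing a preimage different from 1 yields a number whose
  orbit first reaches 1 after exactly k steps, for every k; the preimages of such a number
  then provide infinitely many happy numbers of height k + 1.\<close>

lemma digits_Cons:
  assumes "b \<ge> 2" "d < b" "d + b * r > 0"
  shows "digits b (d + b * r) = d # digits b r"
  using assms by (subst digits.simps) auto

lemma happy_fun_Cons:
  assumes "b \<ge> 2" "d < b" "d + b * r > 0"
  shows "happy_fun e b (d + b * r) = d ^ e + happy_fun e b r"
  using digits_Cons[OF assms] by (simp add: happy_fun_def)

lemma happy_fun_0 [simp]: "happy_fun e b 0 = 0"
  by (simp add: happy_fun_def digits.simps)

fun repunit :: "nat \<Rightarrow> nat \<Rightarrow> nat" where
  "repunit b 0 = 0"
| "repunit b (Suc m) = 1 + b * repunit b m"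

lemma repunit_pos: "m > 0 \<Longrightarrow> repunit b m > 0"
  by (cases m) auto

lemma happy_fun_repunit:
  assumes "b \<ge> 2"
  shows "happy_fun e b (repunit b m) = m"
proof (induction m)
  case 0
  then show ?case by simp
next
  case (Suc m)
  then show ?case using happy_fun_Cons[of b 1 "repunit b m" e] assms by simp
qed

lemma happy_fun_mult_base_power:
  assumes "b \<ge> 2" "e \<ge> 1"
  shows "happy_fun e b (r * b ^ t) = happy_fun e b r"
proof (induction t)
  case 0
  then show ?case by simp
next
  case (Suc t)
  show ?case
  proof (cases "r = 0")
    case False
    have "r * b ^ Suc t = 0 + b * (r * b ^ t)" by simp
    moreover have "r * b ^ Suc t > 0" using False assms by simp
    ultimately have "happy_fun e b (r * b ^ Suc t) = 0 ^ e + happy_fun e b (r * b ^ t)"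
      using happy_fun_Cons[of b 0 "r * b ^ t" e] assms by (simp add: mult.left_commute)
    then show ?thesis using Suc assms by simp
  qed simp
qed

lemma infinite_happy_fun_vimage:
  assumes "b \<ge> 2" "e \<ge> 1" "x > 0"
  shows "infinite (happy_fun e b -` {x})"
proof -
  define f where "f t = repunit b x * b ^ t" for t
  have "inj f"
    using repunit_pos[OF \<open>x > 0\<close>, of b] assms(1) by (auto intro!: injI simp: f_def)
  moreover have "range f \<subseteq> happy_fun e b -` {x}"
    using happy_fun_mult_base_power[OF assms(1,2)] happy_fun_repunit[OF assms(1)]
    by (auto simp: f_def)
  ultimately show ?thesis
    by (metis finite_imageD finite_subset infinite_UNIV_nat)
qed

definition first_reaches_one :: "nat \<Rightarrow> nat \<Rightarrow> nat \<Rightarrow> nat \<Rightarrow> bool" where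
  "first_reaches_one e b n k \<longleftrightarrow>
     (happy_fun e b ^^ k) n = 1 \<and> (\<forall>j<k. (happy_fun e b ^^ j) n \<noteq> 1)"

lemma first_reaches_one_Suc:
  assumes "first_reaches_one e b x k" "happy_fun e b n = x" "n \<noteq> 1"
  shows "first_reaches_one e b n (Suc k)"
  unfolding first_reaches_one_def
proof (intro conjI allI impI)
  show "(happy_fun e b ^^ Suc k) n = 1"
    using assms by (simp add: first_reaches_one_def funpow_Suc_right del: funpow.simps)
  fix j assume "j < Suc k"
  then show "(happy_fun e b ^^ j) n \<noteq> 1"
    using assms by (cases j) (simp_all add: first_reaches_one_def funpow_Suc_right del: funpow.simps)
qed

lemma first_reaches_one_pos:
  assumes "first_reaches_one e b n k"
  shows "n > 0"
proof -
  have "(happy_fun e b ^^ j) 0 = 0" for j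
    by (induction j) simp_all
  then show ?thesis
    using assms by (auto simp: first_reaches_one_def intro: gr0I)
qed

lemma first_reaches_one_imp_height:
  assumes "first_reaches_one e b n k" "k \<ge> 1"
  shows "is_happy e b n \<and> happy_height e b n = k"
proof -
  have "n \<noteq> 1"
    using assms by (auto simp: first_reaches_one_def)
  moreover have "(LEAST l. l \<ge> 1 \<and> (happy_fun e b ^^ l) n = 1) = k"
    by (rule Least_equality) (use assms in \<open>auto simp: first_reaches_one_def not_le[symmetric]\<close>)
  ultimately show ?thesis
    using assms first_reaches_one_pos[OF assms(1)]
    by (auto simp: is_happy_def happy_height_def first_reaches_one_def)
qed

lemma first_reaches_one_exists:
  assumes "b \<ge> 2" "e \<ge> 1"
  shows "\<exists>x. first_reaches_one e b x k"
proof (induction k)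
  case 0
  then show ?case by (auto simp: first_reaches_one_def)
next
  case (Suc k)
  then obtain x where x: "first_reaches_one e b x k" by blast
  have "infinite (happy_fun e b -` {x} - {1})"
    using infinite_happy_fun_vimage[OF assms first_reaches_one_pos[OF x]] by simp
  then obtain n where "happy_fun e b n = x" "n \<noteq> 1"
    using infinite_imp_nonempty by blast
  then show ?case using first_reaches_one_Suc[OF x] by blast
qed

theorem mainTheorem6:
  fixes b e h :: nat
  assumes "b \<ge> 2" and "e \<ge> 2" and "h \<ge> 1"
  shows "infinite {n. is_happy e b n \<and> happy_height e b n = h}"
proof -
  have "e \<ge> 1" using assms(2) by simp
  obtain k where h: "h = Suc k" using assms(3) by (cases h) auto
  obtain x where x: "first_reaches_one e b x k"
    using first_reaches_one_exists[OF assms(1) \<open>e \<ge> 1\<close>] by blast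
  have "happy_fun e b -` {x} - {1} \<subseteq> {n. is_happy e b n \<and> happy_height e b n = h}"
    using first_reaches_one_imp_height[OF first_reaches_one_Suc[OF x]] h by auto
  moreover have "infinite (happy_fun e b -` {x} - {1})"
    using infinite_happy_fun_vimage[OF assms(1) \<open>e \<ge> 1\<close> first_reaches_one_pos[OF x]] by simp
  ultimately show ?thesis
    using finite_subset by blast
qed

end
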